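(* Let $m,n$ be positive integers. Then $$\mathcal{N}_{\frac{n}{m}}(q)=q^d\,\mathcal{D}_{\frac{m}{n}}(q^{-1}),\qquad \mathcal{D}_{\frac{n}{m}}(q)=q^d\,\mathcal{N}_{\frac{m}{n}}(q^{-1}),$$ where $d=\max\big(\deg\mathcal{N}_{\frac{m}{n}},\deg\mathcal{D}_{\frac{m}{n}}\big)$.
   Context: The $q$-deformed rationals: $x\mapsto[x]_q$ is the unique map from $\mathbb{Q}\cup\{\infty\}$ to $\mathbb{Q}(q)\cup\{\infty\}$ (rational functions in the variable $q$) satisfying $[0]_q=0$, $[x+1]_q=q[x]_q+1$ and $[-1/x]_q=-1/(q[x]_q)$ for all $x$. For a positive rational $x$, $\mathcal{N}_x(q)$ and $\mathcal{D}_x(q)$ denote the numerator and denominator of $[x]_q$: the polynomials in $\mathbb{Z}[q]$ with no common divisor in $\mathbb{Z}[q]$ other than $\pm1$ and with positive leading coefficients such that $[x]_q=\mathcal{N}_x(q)/\mathcal{D}_x(q)$. It is known that $[\frac{n}{m}]_q=1/[\frac{m}{n}]_{q^{-1}}$. *)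

theory Defs
  imports Complex_Main "HOL-Computational_Algebra.Polynomial" "HOL-Computational_Algebra.Fraction_Field"
begin

text \<open>Rational functions Q(q) are modelled as the fraction field of rat poly.
  The value None of an option type plays the role of infinity.\<close>

type_synonym ratfun = "rat poly fract"

definition qvar :: ratfun where
  "qvar = Fract [:0, 1:] 1"

definition ext_succ :: "rat option \<Rightarrow> rat option" where
  "ext_succ x = (case x of None \<Rightarrow> None | Some r \<Rightarrow> Some (r + 1))"

definition ext_neg_inv :: "rat option \<Rightarrow> rat option" where
  "ext_neg_inv x = (case x of None \<Rightarrow> Some 0
      | Some r \<Rightarrow> (if r = 0 then None else Some (- 1 / r)))"

definition ext_qsucc :: "ratfun option \<Rightarrow> ratfun option" where
  "ext_qsucc y = (case y of None \<Rightarrow> None | Some f \<Rightarrow> Some (qvar * f + 1))"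

definition ext_qneg_inv :: "ratfun option \<Rightarrow> ratfun option" where
  "ext_qneg_inv y = (case y of None \<Rightarrow> Some 0
      | Some f \<Rightarrow> (if f = 0 then None else Some (- 1 / (qvar * f))))"

definition is_qdeform_map :: "(rat option \<Rightarrow> ratfun option) \<Rightarrow> bool" where
  "is_qdeform_map F \<longleftrightarrow> F (Some 0) = Some 0
     \<and> (\<forall>x. F (ext_succ x) = ext_qsucc (F x))
     \<and> (\<forall>x. F (ext_neg_inv x) = ext_qneg_inv (F x))"

definition qrat :: "rat \<Rightarrow> ratfun option" where
  "qrat x = (THE F. is_qdeform_map F) (Some x)"

definition qND :: "rat \<Rightarrow> int poly \<times> int poly" where
  "qND x = (THE (N, D). lead_coeff N > 0 \<and> lead_coeff D > 0
      \<and> (\<forall>c. c dvd N \<and> c dvd D \<longrightarrow> is_unit c)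
      \<and> qrat x = Some (Fract (map_poly of_int N) (map_poly of_int D)))"

definition qN :: "rat \<Rightarrow> int poly" where "qN x = fst (qND x)"
definition qD :: "rat \<Rightarrow> int poly" where "qD x = snd (qND x)"

end

theory Submission
  imports Defs "HOL-Computational_Algebra.Polynomial_Factorial"
begin

text \<open>For \<open>a, b > 0\<close> the Euclidean algorithm produces integer polynomials \<open>N, D\<close> with
  \<open>[a/b]_q = N/D\<close>: the step \<open>b < a\<close> uses \<open>[x + 1]_q = q [x]_q + 1\<close>, and the step \<open>a < b\<close>
  sets \<open>[a/b]_q = 1 / [b/a]_(1/q)\<close>, so this reciprocity holds by construction. Extended to
  negative arguments by \<open>[-x]_q = -[x]_(1/q) / q\<close>, the model satisfies the defining
  functional equations, which determine \<open>[x]_q\<close> uniquely (induction on the denominator).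

  If \<open>N/D\<close> is the normalized form of \<open>[m/n]_q\<close> and \<open>d = max (deg N) (deg D)\<close>, reciprocity makes
  \<open>q\<^sup>d D(1/q) / q\<^sup>d N(1/q)\<close> a representation of \<open>[n/m]_q\<close>. Reflection at \<open>d\<close> preserves coprimality
  because one of \<open>N, D\<close> has degree exactly \<open>d\<close>. The polynomials of the algorithm are positive on
  \<open>(0, \<infinity>)\<close>, hence so are \<open>N, D\<close> and their reflections, and a polynomial positive on
  \<open>(0, \<infinity>)\<close> has positive leading coefficient. Uniqueness of the normalized form concludes.\<close>

section \<open>Reflecting polynomials at a degree bound\<close>

text \<open>Unlike \<open>reflect_poly\<close>, the reflection is taken at a prescribed bound \<open>k \<ge> degree p\<close>, so that
  numerator and denominator can be reflected at a common degree.\<close>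
definition reflect_at :: "nat \<Rightarrow> 'a::zero poly \<Rightarrow> 'a poly" where
  "reflect_at k p = Abs_poly (\<lambda>i. if i \<le> k then coeff p (k - i) else 0)"

lemma coeff_reflect_at: "coeff (reflect_at k p) i = (if i \<le> k then coeff p (k - i) else 0)"
  unfolding reflect_at_def coeff_Abs_poly_If_le by simp

lemma degree_reflect_at_le: "degree (reflect_at k p) \<le> k"
  by (rule degree_le) (simp add: coeff_reflect_at)

lemma reflect_at_0 [simp]: "reflect_at k 0 = 0"
  by (rule poly_eqI) (simp add: coeff_reflect_at)

lemma reflect_at_reflect_at: "degree p \<le> k \<Longrightarrow> reflect_at k (reflect_at k p) = p"
  by (rule poly_eqI) (auto simp: coeff_reflect_at intro!: coeff_eq_0)

lemma reflect_at_eq_0_iff: "degree p \<le> k \<Longrightarrow> reflect_at k p = 0 \<longleftrightarrow> p = 0"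
  by (metis reflect_at_0 reflect_at_reflect_at)

lemma reflect_at_add: "reflect_at k (p + q) = reflect_at k p + reflect_at k q"
  by (rule poly_eqI) (simp add: coeff_reflect_at)

lemma map_poly_reflect_at: "f 0 = 0 \<Longrightarrow> map_poly f (reflect_at k p) = reflect_at k (map_poly f p)"
  by (rule poly_eqI) (simp add: coeff_reflect_at coeff_map_poly)

lemma reflect_at_conv_reflect_poly:
  fixes p :: "'a::comm_semiring_1 poly"
  assumes "degree p \<le> k"
  shows "reflect_at k p = monom 1 (k - degree p) * reflect_poly p"
  using assms
  by (intro poly_eqI) (auto simp: coeff_reflect_at coeff_monom_mult coeff_reflect_poly intro!: coeff_eq_0)

lemma reflect_at_mult:
  fixes p q :: "'a::{comm_semiring_1,semiring_no_zero_divisors} poly"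
  assumes "degree p \<le> k" "degree q \<le> j"
  shows "reflect_at (k + j) (p * q) = reflect_at k p * reflect_at j q"
proof (cases "p = 0 \<or> q = 0")
  case False
  then have "degree (p * q) = degree p + degree q"
    by (simp add: degree_mult_eq)
  moreover have "k + j - (degree p + degree q) = (k - degree p) + (j - degree q)"
    using assms by simp
  ultimately have "reflect_at (k + j) (p * q)
      = monom 1 (k - degree p) * monom 1 (j - degree q) * (reflect_poly p * reflect_poly q)"
    using assms by (simp add: reflect_at_conv_reflect_poly reflect_poly_mult mult_monom)
  also have "\<dots> = reflect_at k p * reflect_at j q"
    using assms by (simp add: reflect_at_conv_reflect_poly mult_ac)
  finally show ?thesis .
qed auto

lemma poly_reflect_at:
  fixes x :: "'a::field"
  assumes "x \<noteq> 0" "degree p \<le> k"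
  shows "poly (reflect_at k p) x = x ^ k * poly p (inverse x)"
  using assms by (simp add: reflect_at_conv_reflect_poly poly_reflect_poly_nz poly_monom
      flip: mult.assoc power_add)

lemma reflect_at_degree_0 [simp]: "degree p = 0 \<Longrightarrow> reflect_at 0 p = p"
  by (rule poly_eqI) (auto simp: coeff_reflect_at intro!: coeff_eq_0)

lemma reflect_poly_dvd_if_dvd_reflect_at:
  fixes c p :: "'a::idom poly"
  assumes "c dvd reflect_at d p" "degree p \<le> d"
  shows "reflect_poly c dvd p"
proof -
  obtain u where u: "reflect_at d p = c * u"
    using assms(1) by (elim dvdE)
  show ?thesis
  proof (cases "c = 0 \<or> u = 0")
    case True
    then show ?thesis
      using u assms(2) by (auto simp: reflect_at_eq_0_iff)
  next
    case False
    then have "degree c + degree u \<le> d"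
      using degree_reflect_at_le[of d p] u by (simp add: degree_mult_eq)
    then have "p = reflect_at (degree c + (d - degree c)) (c * u)"
      using u reflect_at_reflect_at[OF assms(2)] by simp
    also have "\<dots> = reflect_at (degree c) c * reflect_at (d - degree c) u"
      using \<open>degree c + degree u \<le> d\<close> by (intro reflect_at_mult) auto
    also have "reflect_at (degree c) c = reflect_poly c"
      by (simp add: reflect_at_conv_reflect_poly)
    finally show ?thesis
      by simp
  qed
qed

lemma coprime_reflect_at:
  fixes N D :: "'a::idom_divide poly"
  assumes "coprime N D" and d: "d = max (degree N) (degree D)"
  shows "coprime (reflect_at d N) (reflect_at d D)"
proof (rule coprimeI)
  fix c
  assume c: "c dvd reflect_at d N" "c dvd reflect_at d D"
  have "N \<noteq> 0 \<or> D \<noteq> 0"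
    using assms(1) by auto
  then have "d = degree N \<and> N \<noteq> 0 \<or> d = degree D \<and> D \<noteq> 0"
    using d by (auto simp: max_def)
  then have "coeff N d \<noteq> 0 \<or> coeff D d \<noteq> 0"
    by auto
  then have "coeff (reflect_at d N) 0 \<noteq> 0 \<or> coeff (reflect_at d D) 0 \<noteq> 0"
    by (simp add: coeff_reflect_at)
  then have "coeff c 0 \<noteq> 0"
    using c by (auto elim!: dvdE simp: coeff_mult_0)
  have "reflect_poly c dvd N" "reflect_poly c dvd D"
    using c d by (auto intro: reflect_poly_dvd_if_dvd_reflect_at)
  then have "is_unit (reflect_poly c)"
    by (rule coprime_common_divisor[OF assms(1)])
  moreover have "degree (reflect_poly c) = degree c"
    using \<open>coeff c 0 \<noteq> 0\<close> by simp
  ultimately have "degree c = 0"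
    by (auto simp: is_unit_poly_iff)
  then have "reflect_poly c = c"
    by (metis degree_eq_zeroE reflect_poly_const)
  then show "is_unit c"
    using \<open>is_unit (reflect_poly c)\<close> by simp
qed

section \<open>The substitution \<open>q \<mapsto> 1/q\<close> on rational functions\<close>

lemma Fract_reflect_at_eq:
  fixes a b c d :: "'a::idom poly"
  assumes "b \<noteq> 0" "d \<noteq> 0" "a * d = c * b"
    and "degree a \<le> k" "degree b \<le> k" "degree c \<le> j" "degree d \<le> j"
  shows "Fract (reflect_at k a) (reflect_at k b) = Fract (reflect_at j c) (reflect_at j d)"
proof -
  have "reflect_at k a * reflect_at j d = reflect_at (k + j) (a * d)"
    using assms(4-7) by (simp add: reflect_at_mult)
  also have "\<dots> = reflect_at (j + k) (c * b)"
    by (metis assms(3) add.commute)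
  also have "\<dots> = reflect_at j c * reflect_at k b"
    using assms(4-7) by (simp add: reflect_at_mult)
  finally show ?thesis
    using assms by (simp add: eq_fract reflect_at_eq_0_iff)
qed

text \<open>Numerator and denominator are reflected at a common degree bound; by
  \<open>Fract_reflect_at_eq\<close> neither the representative nor the bound matters.\<close>
definition reflect_fract :: "'a::idom poly fract \<Rightarrow> 'a poly fract" where
  "reflect_fract f = (SOME g. \<exists>a b. b \<noteq> 0 \<and> f = Fract a b
      \<and> g = Fract (reflect_at (max (degree a) (degree b)) a)
                    (reflect_at (max (degree a) (degree b)) b))"

lemma reflect_fract_Fract:
  assumes "b \<noteq> 0" "degree a \<le> k" "degree b \<le> k"
  shows "reflect_fract (Fract a b) = Fract (reflect_at k a) (reflect_at k b)"
proof -
  define P where "P g \<longleftrightarrow> (\<exists>a' b'. b' \<noteq> 0 \<and> Fract a b = Fract a' b'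
      \<and> g = Fract (reflect_at (max (degree a') (degree b')) a') (reflect_at (max (degree a') (degree b')) b'))"
    for g
  have "P (reflect_fract (Fract a b))"
    unfolding reflect_fract_def P_def[symmetric] by (rule someI) (use assms(1) in \<open>auto simp: P_def\<close>)
  then obtain a' b' where "b' \<noteq> 0" "Fract a b = Fract a' b'"
    and g: "reflect_fract (Fract a b)
      = Fract (reflect_at (max (degree a') (degree b')) a') (reflect_at (max (degree a') (degree b')) b')"
    unfolding P_def by blast
  then have "a' * b = a * b'"
    using assms(1) by (simp add: eq_fract)
  then show ?thesis
    unfolding g using assms \<open>b' \<noteq> 0\<close> by (intro Fract_reflect_at_eq) auto
qed

lemma reflect_fract_0 [simp]: "reflect_fract 0 = 0"
  unfolding Zero_fract_def by (subst reflect_fract_Fract[where k = 0]) auto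

lemma reflect_fract_1 [simp]: "reflect_fract 1 = 1"
  unfolding One_fract_def by (subst reflect_fract_Fract[where k = 0]) auto

lemma reflect_fract_add: "reflect_fract (f + g) = reflect_fract f + reflect_fract g"
proof -
  obtain a b where f: "b \<noteq> 0" "f = Fract a b" by (cases f)
  obtain c d where g: "d \<noteq> 0" "g = Fract c d" by (cases g)
  define k where "k = max (degree a) (degree b)"
  define j where "j = max (degree c) (degree d)"
  have rf: "reflect_fract f = Fract (reflect_at k a) (reflect_at k b)"
    "reflect_fract g = Fract (reflect_at j c) (reflect_at j d)"
    using f g by (simp_all add: reflect_fract_Fract k_def j_def)
  have deg: "degree (a * d) \<le> k + j" "degree (c * b) \<le> k + j" "degree (b * d) \<le> k + j"
    by (auto simp: k_def j_def intro!: order.trans[OF degree_mult_le])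
  have "reflect_fract (f + g) = Fract (reflect_at (k + j) (a * d + c * b)) (reflect_at (k + j) (b * d))"
    using f g deg by (auto intro!: reflect_fract_Fract order.trans[OF degree_add_le])
  also have "\<dots> = Fract (reflect_at k a * reflect_at j d + reflect_at j c * reflect_at k b)
      (reflect_at k b * reflect_at j d)"
    using reflect_at_mult[of c j b k]
    by (simp add: reflect_at_add reflect_at_mult k_def j_def add.commute)
  also have "\<dots> = reflect_fract f + reflect_fract g"
    using f(1) g(1) by (simp add: rf k_def j_def reflect_at_eq_0_iff)
  finally show ?thesis .
qed

lemma reflect_fract_mult: "reflect_fract (f * g) = reflect_fract f * reflect_fract g"
proof -
  obtain a b where f: "b \<noteq> 0" "f = Fract a b" by (cases f)
  obtain c d where g: "d \<noteq> 0" "g = Fract c d" by (cases g)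
  define k where "k = max (degree a) (degree b)"
  define j where "j = max (degree c) (degree d)"
  have rf: "reflect_fract f = Fract (reflect_at k a) (reflect_at k b)"
    "reflect_fract g = Fract (reflect_at j c) (reflect_at j d)"
    using f g by (simp_all add: reflect_fract_Fract k_def j_def)
  have "reflect_fract (f * g) = Fract (reflect_at (k + j) (a * c)) (reflect_at (k + j) (b * d))"
    using f g by (auto simp: k_def j_def intro!: reflect_fract_Fract order.trans[OF degree_mult_le])
  also have "\<dots> = reflect_fract f * reflect_fract g"
    by (simp add: rf reflect_at_mult k_def j_def)
  finally show ?thesis .
qed

lemma reflect_fract_reflect_fract [simp]: "reflect_fract (reflect_fract f) = f"
proof -
  obtain a b where f: "b \<noteq> 0" "f = Fract a b" by (cases f)
  define k where "k = max (degree a) (degree b)"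
  have "reflect_fract f = Fract (reflect_at k a) (reflect_at k b)"
    using f by (simp add: reflect_fract_Fract k_def)
  moreover have "reflect_fract (Fract (reflect_at k a) (reflect_at k b)) = f"
    using f by (subst reflect_fract_Fract[where k = k])
      (auto simp: k_def degree_reflect_at_le reflect_at_eq_0_iff reflect_at_reflect_at)
  ultimately show ?thesis by simp
qed

lemma reflect_fract_eq_0_iff [simp]: "reflect_fract f = 0 \<longleftrightarrow> f = 0"
  by (metis reflect_fract_0 reflect_fract_reflect_fract)

lemma reflect_fract_inverse: "reflect_fract (inverse f) = inverse (reflect_fract f)"
  for f :: "'a::field poly fract"
  by (metis inverse_unique inverse_zero reflect_fract_1 reflect_fract_eq_0_iff reflect_fract_mult right_inverse)

lemma reflect_fract_qvar: "reflect_fract qvar = inverse qvar"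
proof -
  have "reflect_fract qvar = Fract (reflect_at 1 [:0, 1:]) (reflect_at 1 1)"
    unfolding qvar_def by (rule reflect_fract_Fract) auto
  also have "reflect_at 1 [:0, 1:] = (1 :: rat poly)"
    by (auto intro!: poly_eqI simp: coeff_reflect_at coeff_pCons split: nat.split)
  also have "reflect_at 1 1 = ([:0, 1:] :: rat poly)"
    by (auto intro!: poly_eqI simp: coeff_reflect_at coeff_pCons split: nat.split)
  finally show ?thesis by (simp add: qvar_def)
qed

section \<open>Integer polynomials positive on the positive reals\<close>

lemma map_poly_of_int_add:
  "map_poly of_int (p + q) = map_poly of_int p + (map_poly of_int q :: 'a::ring_1 poly)"
  by (rule poly_eqI) (simp add: coeff_map_poly)

lemma map_poly_of_int_mult:
  "map_poly of_int (p * q) = map_poly of_int p * (map_poly of_int q :: 'a::comm_ring_1 poly)"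
  by (rule poly_eqI) (simp add: coeff_map_poly coeff_mult)

lemma map_poly_of_int_eq_iff [simp]:
  "map_poly (of_int :: int \<Rightarrow> 'a::ring_char_0) p = map_poly of_int q \<longleftrightarrow> p = q"
  by (metis coeff_map_poly of_int_0 of_int_eq_iff poly_eqI)

lemma map_poly_of_int_eq_0_iff [simp]:
  "map_poly (of_int :: int \<Rightarrow> 'a::ring_char_0) p = 0 \<longleftrightarrow> p = 0"
  using map_poly_of_int_eq_iff[of p 0] by simp

lemma degree_map_poly_of_int [simp]:
  "degree (map_poly (of_int :: int \<Rightarrow> 'a::ring_char_0) p) = degree p"
  by (rule degree_map_poly) simp

definition pos_on_pos_reals :: "int poly \<Rightarrow> bool" where
  "pos_on_pos_reals p \<longleftrightarrow> (\<forall>t::real. 0 < t \<longrightarrow> 0 < poly (map_poly of_int p) t)"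

lemma pos_on_pos_reals_ne_0: "pos_on_pos_reals p \<Longrightarrow> p \<noteq> 0"
  by (auto simp: pos_on_pos_reals_def dest: spec[of _ 1])

lemma pos_on_pos_reals_shift:
  "pos_on_pos_reals N \<Longrightarrow> pos_on_pos_reals D \<Longrightarrow> pos_on_pos_reals ([:0, 1:] * N + D)"
  by (simp add: pos_on_pos_reals_def map_poly_of_int_add map_poly_of_int_mult map_poly_pCons)
    (meson add_pos_pos mult_pos_pos)

lemma pos_on_pos_reals_reflect_at:
  assumes "pos_on_pos_reals p" "degree p \<le> k"
  shows "pos_on_pos_reals (reflect_at k p)"
  using assms by (simp add: pos_on_pos_reals_def map_poly_reflect_at poly_reflect_at)

lemma poly_pos_iff_lead_coeff_pos:
  fixes p :: "real poly"
  assumes roots: "\<forall>x>0. poly p x \<noteq> 0" and "0 < t"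
  shows "0 < poly p t \<longleftrightarrow> 0 < lead_coeff p"
proof -
  have pos: "0 < poly r t" if r_roots: "\<forall>x>0. poly r x \<noteq> 0" and r_lead: "0 < lead_coeff r"
    for r :: "real poly"
  proof (rule ccontr)
    assume "\<not> 0 < poly r t"
    with r_roots \<open>0 < t\<close> have "poly r t < 0"
      by (simp add: not_less order.order_iff_strict)
    obtain n where n: "\<forall>x\<ge>n. lead_coeff r \<le> poly r x"
      using poly_pinfty_gt_lc[OF r_lead] by blast
    then have "0 < poly r (max n (t + 1))"
      using r_lead by (meson max.cobounded1 less_le_trans)
    with \<open>poly r t < 0\<close> obtain x where "t < x" "poly r x = 0"
      using poly_IVT_pos[of t "max n (t + 1)" r] by force
    with r_roots \<open>0 < t\<close> show False
      by auto
  qed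
  have "lead_coeff p \<noteq> 0"
    using roots by (metis leading_coeff_0_iff poly_0 zero_less_one)
  then consider "0 < lead_coeff p" | "0 < lead_coeff (- p)"
    by fastforce
  then show ?thesis
  proof cases
    case 2
    then have "0 < poly (- p) t"
      using roots by (intro pos) auto
    with 2 show ?thesis
      by simp
  qed (use pos roots in auto)
qed

lemma pos_on_pos_reals_lead_coeff:
  assumes "pos_on_pos_reals p"
  shows "0 < lead_coeff p"
proof -
  have "\<forall>x>0. poly (map_poly real_of_int p) x \<noteq> 0"
    using assms by (auto simp: pos_on_pos_reals_def)
  then have "0 < lead_coeff (map_poly real_of_int p)"
    using assms poly_pos_iff_lead_coeff_pos[of "map_poly of_int p" 1]
    by (simp add: pos_on_pos_reals_def)
  then show ?thesis
    by (simp add: coeff_map_poly)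
qed

lemma pos_on_pos_reals_factors:
  assumes ND: "pos_on_pos_reals (N * D)" and "0 < lead_coeff N"
  shows "pos_on_pos_reals N" "pos_on_pos_reals D"
proof -
  have prod: "0 < poly (map_poly of_int N) t * poly (map_poly of_int D) t" if "0 < t" for t :: real
    using ND that by (simp add: pos_on_pos_reals_def map_poly_of_int_mult)
  then have "\<forall>x>0. poly (map_poly real_of_int N) x \<noteq> 0"
    by (metis mult_zero_left less_irrefl)
  then show N: "pos_on_pos_reals N"
    using poly_pos_iff_lead_coeff_pos \<open>0 < lead_coeff N\<close>
    by (simp add: pos_on_pos_reals_def coeff_map_poly)
  show "pos_on_pos_reals D"
    using N prod unfolding pos_on_pos_reals_def by (meson not_less_iff_gr_or_eq zero_less_mult_iff)
qed

lemma coprime_pos_on_pos_reals_representative: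
  fixes P Q :: "int poly"
  assumes P: "pos_on_pos_reals P" and Q: "pos_on_pos_reals Q"
  obtains N D where "coprime N D" "P * D = N * Q" "pos_on_pos_reals N" "pos_on_pos_reals D"
proof -
  define g where "g = gcd P Q"
  define N' where "N' = P div g"
  define D' where "D' = Q div g"
  have PQ: "P = g * N'" "Q = g * D'"
    by (simp_all add: N'_def D'_def g_def)
  have "coprime N' D'"
    unfolding N'_def D'_def g_def using pos_on_pos_reals_ne_0[OF P] by (intro div_gcd_coprime) simp
  have "pos_on_pos_reals (N' * D')"
    unfolding pos_on_pos_reals_def
  proof (intro allI impI)
    fix t :: real
    assume "0 < t"
    then have "0 < poly (map_poly of_int P) t * poly (map_poly of_int Q) t"
      using P Q by (simp add: pos_on_pos_reals_def)
    also have "\<dots> = (poly (map_poly of_int g) t)\<^sup>2 * poly (map_poly of_int (N' * D')) t"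
      by (simp add: PQ map_poly_of_int_mult power2_eq_square)
    finally show "0 < poly (map_poly of_int (N' * D')) t"
      by (simp add: zero_less_mult_iff)
  qed
  define N where "N = (if 0 < lead_coeff N' then N' else - N')"
  define D where "D = (if 0 < lead_coeff N' then D' else - D')"
  have "N' \<noteq> 0"
    using pos_on_pos_reals_ne_0[OF \<open>pos_on_pos_reals (N' * D')\<close>] by auto
  then have "lead_coeff N' < 0 \<or> 0 < lead_coeff N'"
    by (metis leading_coeff_0_iff linorder_neqE)
  then have "0 < lead_coeff N"
    by (auto simp: N_def)
  moreover have "N * D = N' * D'"
    by (simp add: N_def D_def)
  ultimately have "pos_on_pos_reals N" "pos_on_pos_reals D"
    using pos_on_pos_reals_factors[of N D] \<open>pos_on_pos_reals (N' * D')\<close> by simp_all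
  moreover have "coprime N D"
    using \<open>coprime N' D'\<close> by (simp add: N_def D_def)
  moreover have "P * D = N * Q"
    by (simp add: PQ N_def D_def mult_ac)
  ultimately show ?thesis
    using that by blast
qed

section \<open>An explicit model of \<open>[x]_q\<close>\<close>

lemma qvar_ne_0: "qvar \<noteq> 0"
  by (simp add: qvar_def Zero_fract_def eq_fract)

function qpair :: "nat \<Rightarrow> nat \<Rightarrow> int poly \<times> int poly" where
  "qpair a b = (if a = 0 \<or> b = 0 then (0, 1) else if a = b then (1, 1)
     else if b < a then (let (N, D) = qpair (a - b) b in ([:0, 1:] * N + D, D))
     else (let (N, D) = qpair b a; k = max (degree N) (degree D)
           in (reflect_at k D, reflect_at k N)))"
  by pat_completeness auto
termination
  by (relation "measure (\<lambda>(a, b). 2 * (a + b) + (if a < b then 1 else 0))") auto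

declare qpair.simps [simp del]

lemma qpair_diag: "0 < a \<Longrightarrow> qpair a a = (1, 1)"
  by (subst qpair.simps) simp

lemma qpair_greater:
  "0 < b \<Longrightarrow> b < a \<Longrightarrow> qpair (a - b) b = (N, D) \<Longrightarrow> qpair a b = ([:0, 1:] * N + D, D)"
  by (subst qpair.simps) simp

lemma qpair_less:
  "0 < a \<Longrightarrow> a < b \<Longrightarrow> qpair b a = (N, D) \<Longrightarrow> k = max (degree N) (degree D) \<Longrightarrow>
    qpair a b = (reflect_at k D, reflect_at k N)"
  by (subst qpair.simps) (simp add: Let_def)

lemma qpair_pos_on_pos_reals:
  "0 < a \<Longrightarrow> 0 < b \<Longrightarrow> qpair a b = (N, D) \<Longrightarrow> pos_on_pos_reals N \<and> pos_on_pos_reals D"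
proof (induction a b arbitrary: N D rule: qpair.induct)
  case (1 a b)
  consider "a = b" | "b < a" | "a < b" by linarith
  then show ?case
  proof cases
    case 1
    then show ?thesis using "1.prems" by (simp add: qpair_diag pos_on_pos_reals_def)
  next
    case 2
    obtain N' D' where "qpair (a - b) b = (N', D')" by fastforce
    with "1.IH"(1) "1.prems" 2 show ?thesis
      using pos_on_pos_reals_shift[of N' D'] by (auto simp: qpair_greater)
  next
    case 3
    obtain N' D' where "qpair b a = (N', D')" by fastforce
    with "1.IH"(2) "1.prems" 3 show ?thesis
      by (auto simp: qpair_less pos_on_pos_reals_reflect_at)
  qed
qed

lemma qpair_scale: "0 < c \<Longrightarrow> qpair (c * a) (c * b) = qpair a b"
proof (induction a b rule: qpair.induct)
  case (1 a b)
  consider "a = 0 \<or> b = 0" | "a = b" | "0 < b" "b < a" | "0 < a" "a < b" by linarith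
  then show ?case
  proof cases
    case 1
    then show ?thesis using "1.prems" by (subst (1 2) qpair.simps) auto
  next
    case 2
    then show ?thesis using "1.prems" by (subst (1 2) qpair.simps) auto
  next
    case 3
    then have "qpair (c * a - c * b) (c * b) = qpair (a - b) b"
      using "1.IH"(1) "1.prems" by (simp add: diff_mult_distrib2)
    then show ?thesis using 3 "1.prems" by (subst (1 2) qpair.simps) auto
  next
    case 4
    then have "qpair (c * b) (c * a) = qpair b a"
      using "1.IH"(2) "1.prems" by simp
    then show ?thesis using 4 "1.prems" by (subst (1 2) qpair.simps) auto
  qed
qed

definition qfrac :: "nat \<Rightarrow> nat \<Rightarrow> ratfun" where
  "qfrac a b = Fract (map_poly of_int (fst (qpair a b))) (map_poly of_int (snd (qpair a b)))"

lemma qfrac_ne_0: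
  assumes "0 < a" "0 < b"
  shows "qfrac a b \<noteq> 0"
proof -
  obtain N D where ND: "qpair a b = (N, D)" by fastforce
  then have "N \<noteq> 0" "D \<noteq> 0"
    using qpair_pos_on_pos_reals[OF assms ND] pos_on_pos_reals_ne_0 by auto
  then show ?thesis
    using ND by (simp add: qfrac_def Zero_fract_def eq_fract)
qed

lemma qfrac_diag: "0 < a \<Longrightarrow> qfrac a a = 1"
  by (simp add: qfrac_def qpair_diag One_fract_def)

lemma qfrac_greater:
  assumes "0 < b" "b < a"
  shows "qfrac a b = qvar * qfrac (a - b) b + 1"
proof -
  obtain N D where ND: "qpair (a - b) b = (N, D)" by fastforce
  have "D \<noteq> 0"
    using qpair_pos_on_pos_reals[OF _ assms(1) ND] assms pos_on_pos_reals_ne_0 by simp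
  then show ?thesis
    using assms ND
    by (simp add: qfrac_def qpair_greater qvar_def One_fract_def map_poly_of_int_add
        map_poly_of_int_mult map_poly_pCons)
qed

lemma qfrac_less:
  assumes "0 < a" "a < b"
  shows "qfrac a b = inverse (reflect_fract (qfrac b a))"
proof -
  obtain N D where ND: "qpair b a = (N, D)" by fastforce
  define k where "k = max (degree N) (degree D)"
  have "pos_on_pos_reals D"
    using qpair_pos_on_pos_reals[OF _ assms(1) ND] assms by simp
  then have "reflect_fract (qfrac b a)
      = Fract (reflect_at k (map_poly of_int N)) (reflect_at k (map_poly of_int D))"
    using ND unfolding qfrac_def
    by (subst reflect_fract_Fract[where k = k]) (auto simp: k_def pos_on_pos_reals_ne_0)
  moreover have "qpair a b = (reflect_at k D, reflect_at k N)"
    using assms ND k_def by (rule qpair_less)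
  ultimately show ?thesis
    by (simp add: qfrac_def map_poly_reflect_at)
qed

lemma qfrac_swap:
  assumes "0 < a" "0 < b"
  shows "qfrac b a = inverse (reflect_fract (qfrac a b))"
proof -
  consider "a = b" | "a < b" | "b < a" by linarith
  then show ?thesis
  proof cases
    case 1
    then show ?thesis using assms by (simp add: qfrac_diag)
  next
    case 2
    then have "qfrac a b = inverse (reflect_fract (qfrac b a))"
      using assms(1) by (intro qfrac_less)
    then show ?thesis by (simp add: reflect_fract_inverse)
  next
    case 3
    then show ?thesis using assms(2) by (intro qfrac_less)
  qed
qed

lemma qfrac_scale: "0 < c \<Longrightarrow> qfrac (c * a) (c * b) = qfrac a b"
  by (simp add: qfrac_def qpair_scale)

lemma pos_rat_cases:
  fixes x :: rat
  assumes "0 < x"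
  obtains a b :: nat where "0 < a" "0 < b" "x = of_nat a / of_nat b"
proof -
  obtain p q where pq: "quotient_of x = (p, q)" by fastforce
  have "0 < q" "x = of_int p / of_int q"
    using quotient_of_denom_pos[OF pq] quotient_of_div[OF pq] by auto
  moreover from this have "0 < p"
    using assms by (simp add: zero_less_divide_iff)
  ultimately show ?thesis
    by (intro that[of "nat p" "nat q"]) auto
qed

definition qpos :: "rat \<Rightarrow> ratfun" where
  "qpos x = qfrac (nat (fst (quotient_of x))) (nat (snd (quotient_of x)))"

lemma qpos_fraction:
  assumes "0 < a" "0 < b"
  shows "qpos (of_nat a / of_nat b) = qfrac a b"
proof -
  obtain p q where pq: "quotient_of (of_nat a / of_nat b) = (p, q)" by fastforce
  have "0 < q" "of_nat a / of_nat b = (of_int p / of_int q :: rat)"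
    using quotient_of_denom_pos[OF pq] quotient_of_div[OF pq] by auto
  then have "rat_of_int (int a * q) = rat_of_int (p * int b)"
    using assms by (simp add: frac_eq_eq)
  then have cross: "int a * q = p * int b"
    by (simp only: of_int_eq_iff)
  moreover have "0 < int a * q"
    using assms \<open>0 < q\<close> by simp
  ultimately have "0 < p"
    using assms by (simp add: zero_less_mult_iff)
  with cross \<open>0 < q\<close> have "a * nat q = nat p * b"
    by (metis nat_int nat_mult_distrib of_nat_0_le_iff order.strict_implies_order)
  have "qpos (of_nat a / of_nat b) = qfrac (b * nat p) (b * nat q)"
    using assms by (simp add: qpos_def pq qfrac_scale)
  also have "\<dots> = qfrac (nat q * a) (nat q * b)"
    using \<open>a * nat q = nat p * b\<close> by (simp add: mult.commute)
  also have "\<dots> = qfrac a b"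
    using \<open>0 < q\<close> by (simp add: qfrac_scale)
  finally show ?thesis .
qed

lemma qpos_ne_0: "0 < x \<Longrightarrow> qpos x \<noteq> 0"
  by (elim pos_rat_cases) (simp add: qpos_fraction qfrac_ne_0)

lemma qpos_1: "qpos 1 = 1"
  using qpos_fraction[of 1 1] by (simp add: qfrac_diag)

lemma qpos_succ:
  assumes "0 < x"
  shows "qpos (x + 1) = qvar * qpos x + 1"
proof -
  obtain a b where ab: "0 < a" "0 < b" "x = of_nat a / of_nat b"
    using assms by (elim pos_rat_cases)
  then have "x + 1 = of_nat (a + b) / of_nat b"
    by (simp add: add_divide_distrib)
  then have "qpos (x + 1) = qfrac (a + b) b"
    using ab by (simp only:) (intro qpos_fraction; simp)
  then show ?thesis
    using ab qfrac_greater[of b "a + b"] by (simp add: qpos_fraction)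
qed

lemma qpos_inverse:
  assumes "0 < x"
  shows "qpos (inverse x) = inverse (reflect_fract (qpos x))"
proof -
  obtain a b where ab: "0 < a" "0 < b" "x = of_nat a / of_nat b"
    using assms by (elim pos_rat_cases)
  then have "inverse x = of_nat b / of_nat a"
    by simp
  then show ?thesis
    using ab qfrac_swap[of a b] by (simp add: qpos_fraction)
qed

lemma qpos_one_minus:
  assumes "0 < y" "y < 1"
  shows "qpos (1 - y) = 1 - reflect_fract (qpos y)"
proof -
  obtain b a where ab: "0 < b" "0 < a" "y = of_nat b / of_nat a"
    using assms(1) by (elim pos_rat_cases)
  with assms(2) have "b < a"
    by simp
  define V where "V = qfrac (a - b) b"
  have "V \<noteq> 0" "qvar * V + 1 \<noteq> 0"
    using ab \<open>b < a\<close> qfrac_ne_0[of a b] qfrac_greater[of b a] by (simp_all add: V_def qfrac_ne_0)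
  have "1 - y = of_nat (a - b) / of_nat a"
    using ab \<open>b < a\<close> by (simp add: field_simps of_nat_diff)
  then have "qpos (1 - y) = qfrac (a - b) a"
    using ab \<open>b < a\<close> by (simp only:) (intro qpos_fraction; simp)
  also have "\<dots> = inverse (reflect_fract (qfrac a (a - b)))"
    using ab \<open>b < a\<close> by (intro qfrac_swap) auto
  also have "qfrac a (a - b) = qvar * inverse (reflect_fract V) + 1"
    using ab \<open>b < a\<close> qfrac_greater[of "a - b" a] qfrac_swap[of "a - b" b] by (simp add: V_def)
  also have "inverse (reflect_fract (qvar * inverse (reflect_fract V) + 1))
      = inverse (inverse qvar * inverse V + 1)"
    by (simp add: reflect_fract_add reflect_fract_mult reflect_fract_qvar reflect_fract_inverse)
  also have "\<dots> = 1 - inverse (qvar * V + 1)"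
    using \<open>V \<noteq> 0\<close> \<open>qvar * V + 1 \<noteq> 0\<close> qvar_ne_0 by (simp add: field_simps)
  also have "inverse (qvar * V + 1) = reflect_fract (qpos y)"
    using ab \<open>b < a\<close> qfrac_greater[of b a] qfrac_swap[of a b]
    by (simp add: V_def qpos_fraction reflect_fract_inverse)
  finally show ?thesis .
qed

definition qext :: "rat \<Rightarrow> ratfun" where
  "qext x = (if x = 0 then 0 else if 0 < x then qpos x
     else - (inverse qvar * reflect_fract (qpos (- x))))"

lemma qext_0 [simp]: "qext 0 = 0"
  by (simp add: qext_def)

lemma qext_ne_0: "x \<noteq> 0 \<Longrightarrow> qext x \<noteq> 0"
  using qpos_ne_0[of x] qpos_ne_0[of "- x"] qvar_ne_0 by (auto simp: qext_def)

lemma qext_succ: "qext (x + 1) = qvar * qext x + 1"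
proof -
  consider "x = 0" | "0 < x" | "x = -1" | "x < -1" | "-1 < x" "x < 0" by linarith
  then show ?thesis
  proof cases
    case 1
    then show ?thesis by (simp add: qext_def qpos_1)
  next
    case 2
    then show ?thesis by (simp add: qext_def qpos_succ)
  next
    case 3
    then show ?thesis by (simp add: qext_def qpos_1 qvar_ne_0)
  next
    case 4
    then have "qpos (- x) = qvar * qpos (- (x + 1)) + 1"
      using qpos_succ[of "- x - 1"] by simp
    then have "reflect_fract (qpos (- x)) = inverse qvar * reflect_fract (qpos (- (x + 1))) + 1"
      by (simp add: reflect_fract_add reflect_fract_mult reflect_fract_qvar)
    with 4 show ?thesis
      by (simp add: qext_def algebra_simps qvar_ne_0)
  next
    case 5
    then have "qpos (x + 1) = 1 - reflect_fract (qpos (- x))"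
      using qpos_one_minus[of "- x"] by (simp add: add.commute)
    with 5 show ?thesis
      using qvar_ne_0 by (simp add: qext_def field_simps)
  qed
qed

lemma qext_neg_inverse:
  assumes "x \<noteq> 0"
  shows "qext (- 1 / x) = - 1 / (qvar * qext x)"
proof (cases "0 < x")
  case True
  then have "reflect_fract (qpos (inverse x)) = inverse (qpos x)"
    by (simp add: qpos_inverse reflect_fract_inverse)
  with True show ?thesis
    using qvar_ne_0 by (simp add: qext_def field_simps)
next
  case False
  with assms have "0 < - x"
    by simp
  then have "qpos (inverse (- x)) = inverse (reflect_fract (qpos (- x)))"
    by (rule qpos_inverse)
  moreover have "reflect_fract (qpos (- x)) \<noteq> 0"
    using qpos_ne_0[OF \<open>0 < - x\<close>] by simp
  ultimately show ?thesis
    using False assms qvar_ne_0 by (simp add: qext_def field_simps)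
qed

lemma is_qdeform_map_qext: "is_qdeform_map (map_option qext)"
  unfolding is_qdeform_map_def
proof (intro conjI allI)
  show "map_option qext (Some 0) = Some 0"
    by simp
next
  show "map_option qext (ext_succ x) = ext_qsucc (map_option qext x)" for x
    by (cases x) (simp_all add: ext_succ_def ext_qsucc_def qext_succ)
next
  show "map_option qext (ext_neg_inv x) = ext_qneg_inv (map_option qext x)" for x
  proof (cases x)
    case (Some r)
    then show ?thesis
      using qext_neg_inverse[of r] qext_ne_0[of r]
      by (cases "r = 0") (simp_all only: ext_neg_inv_def ext_qneg_inv_def option.simps if_True
          if_False qext_0 simp_thms)
  qed (simp add: ext_neg_inv_def ext_qneg_inv_def)
qed

lemma qdeform_map_succ:
  assumes "is_qdeform_map F"
  shows "F (Some (x + 1)) = ext_qsucc (F (Some x))"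
proof -
  have "F (ext_succ (Some x)) = ext_qsucc (F (Some x))"
    using assms by (simp add: is_qdeform_map_def)
  then show ?thesis
    by (simp add: ext_succ_def)
qed

lemma qdeform_map_neg_inv:
  assumes "is_qdeform_map F"
  shows "F (ext_neg_inv x) = ext_qneg_inv (F x)"
  using assms by (simp add: is_qdeform_map_def)

lemma ext_qsucc_inj: "inj ext_qsucc"
proof (rule injI)
  show "ext_qsucc u = ext_qsucc v \<Longrightarrow> u = v" for u v
    using qvar_ne_0 by (cases u; cases v) (auto simp: ext_qsucc_def)
qed

lemma qdeform_maps_agree_shift:
  fixes k :: int
  assumes F: "is_qdeform_map F" and G: "is_qdeform_map G"
  shows "F (Some x) = G (Some x) \<longleftrightarrow> F (Some (x + of_int k)) = G (Some (x + of_int k))"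
proof -
  have step: "F (Some y) = G (Some y) \<longleftrightarrow> F (Some (y + 1)) = G (Some (y + 1))" for y
    using injD[OF ext_qsucc_inj] by (auto simp: qdeform_map_succ[OF F] qdeform_map_succ[OF G])
  show ?thesis
  proof (induction k rule: int_induct[where k = 0])
    case (step1 i)
    then show ?case
      using step[of "x + of_int i"] by (simp add: add.assoc)
  next
    case (step2 i)
    then show ?case
      using step[of "x + of_int (i - 1)"] by (simp add: add.assoc)
  qed simp
qed

lemma qdeform_maps_agree_fraction:
  fixes a :: int
  assumes F: "is_qdeform_map F" and G: "is_qdeform_map G" and "0 < b"
  shows "F (Some (of_int a / of_nat b)) = G (Some (of_int a / of_nat b))"
  using \<open>0 < b\<close>
proof (induction b arbitrary: a rule: less_induct)
  case (less b)
  define c where "c = a mod int b"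
  have c: "0 \<le> c" "c < int b"
    using less.prems by (auto simp: c_def)
  have "(of_int a :: rat) = of_int (int b * (a div int b) + c)"
    by (simp add: c_def)
  then have a: "of_int a / of_nat b = (of_int c / of_nat b + of_int (a div int b) :: rat)"
    using less.prems by (simp add: field_simps)
  have "F (Some (of_int c / of_nat b)) = G (Some (of_int c / of_nat b))"
  proof (cases "c = 0")
    case False
    \<comment> \<open>\<open>c/b = -1/y\<close> where \<open>y\<close> has the smaller denominator \<open>c\<close>\<close>
    define y :: rat where "y = of_int (- int b) / of_nat (nat c)"
    have "y \<noteq> 0" "- 1 / y = of_int c / of_nat b"
      using c False less.prems by (auto simp: y_def)
    moreover have "F (Some y) = G (Some y)"
      unfolding y_def using c False by (intro less.IH) auto
    ultimately show ?thesis
      using qdeform_map_neg_inv[OF F, of "Some y"] qdeform_map_neg_inv[OF G, of "Some y"]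
      by (simp add: ext_neg_inv_def)
  qed (use F G in \<open>simp add: is_qdeform_map_def\<close>)
  then show ?case
    unfolding a using qdeform_maps_agree_shift[OF F G] by blast
qed

lemma qdeform_map_unique:
  assumes F: "is_qdeform_map F" and G: "is_qdeform_map G"
  shows "F = G"
proof
  fix x
  have "F (Some r) = G (Some r)" for r
  proof -
    obtain p q where pq: "quotient_of r = (p, q)" by fastforce
    then have "0 < q" "r = of_int p / of_nat (nat q)"
      using quotient_of_denom_pos[OF pq] quotient_of_div[OF pq] by auto
    then show ?thesis
      using qdeform_maps_agree_fraction[OF F G, of "nat q" p] by simp
  qed
  moreover have "F None = G None"
    using qdeform_map_neg_inv[OF F, of "Some 0"] qdeform_map_neg_inv[OF G, of "Some 0"] F G
    by (simp add: ext_neg_inv_def is_qdeform_map_def)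
  ultimately show "F x = G x"
    by (cases x) auto
qed

lemma qrat_eq: "qrat x = Some (qext x)"
proof -
  have "(THE F. is_qdeform_map F) = map_option qext"
    using is_qdeform_map_qext qdeform_map_unique by blast
  then show ?thesis
    by (simp add: qrat_def)
qed

lemma qrat_fraction: "0 < m \<Longrightarrow> 0 < n \<Longrightarrow> qrat (of_nat m / of_nat n) = Some (qfrac m n)"
  by (simp add: qrat_eq qext_def qpos_fraction)

section \<open>Normalized numerator and denominator\<close>

lemma normalize_int_poly_lead_coeff_pos: "0 < lead_coeff p \<Longrightarrow> normalize p = (p :: int poly)"
  by (rule poly_eqI) simp

lemma coprime_lead_coeff_pos_unique:
  fixes N1 D1 N2 D2 :: "int poly"
  assumes "coprime N1 D1" "coprime N2 D2" "0 < lead_coeff N1" "0 < lead_coeff N2"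
    and cross: "N1 * D2 = N2 * D1"
  shows "N1 = N2" "D1 = D2"
proof -
  have "N1 dvd N2 * D1" "N2 dvd N1 * D2"
    by (simp flip: cross, simp add: cross)
  then have "N1 dvd N2" "N2 dvd N1"
    using coprime_dvd_mult_left_iff[OF assms(1)] coprime_dvd_mult_left_iff[OF assms(2)] by blast+
  then show "N1 = N2"
    using assms(3,4) by (rule associated_eqI[OF _ _ normalize_int_poly_lead_coeff_pos
        normalize_int_poly_lead_coeff_pos])
  moreover have "N1 \<noteq> 0"
    using assms(3) by auto
  ultimately show "D1 = D2"
    using cross by simp
qed

definition normalized_qND :: "rat \<Rightarrow> int poly \<Rightarrow> int poly \<Rightarrow> bool" where
  "normalized_qND x N D \<longleftrightarrow> 0 < lead_coeff N \<and> 0 < lead_coeff D \<and> coprime N D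
     \<and> qrat x = Some (Fract (map_poly of_int N) (map_poly of_int D))"

lemma qND_eqI:
  assumes "normalized_qND x N D"
  shows "qND x = (N, D)"
  unfolding qND_def
proof (rule the_equality)
  fix ND :: "int poly \<times> int poly"
  obtain N' D' where ND: "ND = (N', D')" by fastforce
  assume "case ND of (N, D) \<Rightarrow> 0 < lead_coeff N \<and> 0 < lead_coeff D
      \<and> (\<forall>c. c dvd N \<and> c dvd D \<longrightarrow> is_unit c)
      \<and> qrat x = Some (Fract (map_poly of_int N) (map_poly of_int D))"
  then have N'D': "normalized_qND x N' D'"
    by (simp add: ND normalized_qND_def coprime_def)
  then have "Fract (map_poly of_int N') (map_poly of_int D')
      = (Fract (map_poly of_int N) (map_poly of_int D) :: ratfun)"
    using assms by (simp add: normalized_qND_def)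
  moreover have "D \<noteq> 0" "D' \<noteq> 0"
    using assms N'D' by (auto simp: normalized_qND_def)
  ultimately have "map_poly of_int (N' * D) = (map_poly of_int (N * D') :: rat poly)"
    by (simp add: eq_fract(1) map_poly_of_int_mult)
  then have "N' * D = N * D'"
    by (simp only: map_poly_of_int_eq_iff)
  with N'D' assms have "N' = N" "D' = D"
    unfolding normalized_qND_def by (metis coprime_lead_coeff_pos_unique)+
  then show "ND = (N, D)"
    by (simp add: ND)
qed (use assms in \<open>simp add: normalized_qND_def coprime_def\<close>)

lemma normalized_qND_exists:
  assumes "0 < m" "0 < n"
  obtains N D where "normalized_qND (of_nat m / of_nat n) N D"
    "pos_on_pos_reals N" "pos_on_pos_reals D"
proof -
  obtain P Q where PQ: "qpair m n = (P, Q)" by fastforce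
  then have "pos_on_pos_reals P" "pos_on_pos_reals Q"
    using qpair_pos_on_pos_reals[OF assms] by auto
  then obtain N D where "coprime N D" "P * D = N * Q" "pos_on_pos_reals N" "pos_on_pos_reals D"
    by (rule coprime_pos_on_pos_reals_representative)
  moreover have "Fract (map_poly of_int P) (map_poly of_int Q) = (Fract (map_poly of_int N) (map_poly of_int D) :: ratfun)"
    using calculation \<open>pos_on_pos_reals Q\<close>
    by (simp add: eq_fract pos_on_pos_reals_ne_0 flip: map_poly_of_int_mult)
  ultimately show ?thesis
    using assms PQ by (intro that[of N D]) (simp_all add: normalized_qND_def pos_on_pos_reals_lead_coeff
        qrat_fraction qfrac_def)
qed

lemma normalized_qND_reciprocal:
  assumes "0 < m" "0 < n" and mn: "normalized_qND (of_nat m / of_nat n) N D"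
    and pos: "pos_on_pos_reals N" "pos_on_pos_reals D"
    and d: "d = max (degree N) (degree D)"
  shows "normalized_qND (of_nat n / of_nat m) (reflect_at d D) (reflect_at d N)"
proof -
  have deg: "degree N \<le> d" "degree D \<le> d"
    using d by auto
  have "qfrac m n = Fract (map_poly of_int N) (map_poly of_int D)"
    using mn qrat_fraction[OF assms(1,2)] by (simp add: normalized_qND_def)
  then have "reflect_fract (qfrac m n)
      = Fract (map_poly of_int (reflect_at d N)) (map_poly of_int (reflect_at d D))"
    using deg pos_on_pos_reals_ne_0[OF pos(2)] by (simp add: reflect_fract_Fract map_poly_reflect_at)
  then have "qrat (of_nat n / of_nat m)
      = Some (Fract (map_poly of_int (reflect_at d D)) (map_poly of_int (reflect_at d N)))"
    by (simp add: qrat_fraction[OF assms(2,1)] qfrac_swap[OF assms(1,2)])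
  moreover have "coprime (reflect_at d D) (reflect_at d N)"
    using mn d coprime_reflect_at[of N D d] by (simp add: normalized_qND_def coprime_commute)
  ultimately show ?thesis
    using pos deg by (simp add: normalized_qND_def pos_on_pos_reals_lead_coeff pos_on_pos_reals_reflect_at)
qed

theorem corollary1:
  fixes m n :: nat
  assumes "m > 0" and "n > 0"
  defines "d \<equiv> max (degree (qN (of_nat m / of_nat n))) (degree (qD (of_nat m / of_nat n)))"
  shows "\<forall>q :: real. q \<noteq> 0 \<longrightarrow>
      poly (map_poly of_int (qN (of_nat n / of_nat m))) q
        = q ^ d * poly (map_poly of_int (qD (of_nat m / of_nat n))) (inverse q)
    \<and> poly (map_poly of_int (qD (of_nat n / of_nat m))) q
        = q ^ d * poly (map_poly of_int (qN (of_nat m / of_nat n))) (inverse q)"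
proof -
  obtain N D where ND: "normalized_qND (of_nat m / of_nat n) N D"
    and pos: "pos_on_pos_reals N" "pos_on_pos_reals D"
    using normalized_qND_exists[OF assms(1,2)] .
  then have mn: "qN (of_nat m / of_nat n) = N" "qD (of_nat m / of_nat n) = D"
    by (simp_all add: qN_def qD_def qND_eqI)
  then have "d = max (degree N) (degree D)"
    by (simp add: d_def)
  then have "normalized_qND (of_nat n / of_nat m) (reflect_at d D) (reflect_at d N)"
    using normalized_qND_reciprocal[OF assms(1,2) ND pos] by simp
  then have nm: "qN (of_nat n / of_nat m) = reflect_at d D" "qD (of_nat n / of_nat m) = reflect_at d N"
    by (simp_all add: qN_def qD_def qND_eqI)
  have "degree N \<le> d" "degree D \<le> d"
    using \<open>d = max (degree N) (degree D)\<close> by auto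
  then show ?thesis
    by (simp add: mn nm map_poly_reflect_at poly_reflect_at)
qed

end
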